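(* Let $n$ and $p$ be positive integers with $p \leq \tfrac{2n}{3} - 1$. Let $\mathcal{G} = (\mathcal{V}, \mathcal{E})$ be a connected undirected graph with vertex set $\mathcal{V} = \{1, \ldots, N\}$, and define $U : \mathsf{St}(p,n)^N \to \mathbb{R}$ by $$U(S_1, \ldots, S_N) = \sum_{\{i,j\} \in \mathcal{E}} \bigl(p - \langle S_i, S_j \rangle\bigr) = \tfrac12 \sum_{\{i,j\}\in\mathcal{E}} \|S_i - S_j\|^2 .$$ Then every (local) minimizer $(S_1,\ldots,S_N)$ of $U$ on $\mathsf{St}(p,n)^N$ belongs to the consensus manifold $$\mathcal{C} = \{(S_i)_{i=1}^N \in \mathsf{St}(p,n)^N \mid S_i = S_j \text{ for all } \{i,j\} \in \mathcal{E}\}.$$ That is, every connected graph is $\mathsf{St}(p,n)$-synchronizing.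
   Context: The compact real Stiefel manifold is $\mathsf{St}(p,n) = \{S \in \mathbb{R}^{n\times p} \mid S^\top S = I_p\}$, viewed as an embedded submanifold of $\mathbb{R}^{n\times p}$ with the Euclidean (Frobenius) inner product $\langle X, Y\rangle = \operatorname{tr}(X^\top Y)$ and norm $\|X\| = \langle X,X\rangle^{1/2}$. A graph $\mathcal{G}$ is called $\mathsf{St}(p,n)$-synchronizing (for the potential $U$ above) if all minimizers of $U$ belong to the consensus manifold $\mathcal{C}$. *)

theory Defs
  imports "HOL-Analysis.Analysis"
begin

text \<open>Compact Stiefel manifold St(p,n): n x p real matrices S with S^T S = I_p.
  Rows are indexed by 'n, columns by 'p. The norm on real^'p^'n is the
  Frobenius norm and the inner product is tr(X^T Y).\<close>
definition stiefel :: "(real^'p^'n) set" where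
  "stiefel = {S. transpose S ** S = mat 1}"

text \<open>Undirected simple graph on vertex set {1..N}, edges stored as a symmetric,
  irreflexive relation (each undirected edge {i,j} appears as (i,j) and (j,i)).\<close>
definition undirected_graph :: "nat \<Rightarrow> (nat \<times> nat) set \<Rightarrow> bool" where
  "undirected_graph N E \<longleftrightarrow> E \<subseteq> {1..N} \<times> {1..N} \<and> sym E \<and> (\<forall>i. (i,i) \<notin> E)"

definition connected_graph :: "nat \<Rightarrow> (nat \<times> nat) set \<Rightarrow> bool" where
  "connected_graph N E \<longleftrightarrow> undirected_graph N E \<and> (\<forall>i\<in>{1..N}. \<forall>j\<in>{1..N}. (i,j) \<in> E\<^sup>*)"

text \<open>The potential U: sum over undirected edges {i,j} (each counted once, via i<j).\<close>
definition potential :: "(nat \<times> nat) set \<Rightarrow> (nat \<Rightarrow> real^'p^'n) \<Rightarrow> real" where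
  "potential E S = (\<Sum>(i,j)\<in>{(i,j). (i,j) \<in> E \<and> i < j}. real CARD('p) - S i \<bullet> S j)"

definition config_space :: "nat \<Rightarrow> (nat \<Rightarrow> real^'p^'n) set" where
  "config_space N = {S. \<forall>i\<in>{1..N}. S i \<in> stiefel}"

definition local_minimizer :: "nat \<Rightarrow> (nat \<times> nat) set \<Rightarrow> (nat \<Rightarrow> real^'p^'n) \<Rightarrow> bool" where
  "local_minimizer N E S \<longleftrightarrow> S \<in> config_space N \<and>
     (\<exists>\<epsilon>>0. \<forall>S'\<in>config_space N. (\<forall>i\<in>{1..N}. dist (S' i) (S i) < \<epsilon>)
        \<longrightarrow> potential E S \<le> potential E S')"

definition consensus :: "nat \<Rightarrow> (nat \<times> nat) set \<Rightarrow> (nat \<Rightarrow> real^'p^'n) set" where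
  "consensus N E = {S \<in> config_space N. \<forall>(i,j)\<in>E. S i = S j}"

end

theory Submission
  imports Defs
begin

(* At a local minimizer the second variation of the potential is nonnegative along every
   tangent direction.  Take at every node i the projection of one and the same matrix V
   onto the tangent space at S_i, and sum the second-order condition over all matrix units V.
   The sum splits into one term per edge {i,j}, an explicit function of
   t = <S_i, S_j> and x = |S_i^T S_j|^2, and using t <= p and t^2 <= p x one finds
   4 p (edge term) <= -2 (p + 1) (p - t)^2 as soon as p <= 2n/3 - 1.  A nonnegative sum of
   nonpositive edge terms forces every term to vanish, hence t = p, i.e. S_i = S_j. *)

section \<open>Matrix algebra\<close>

lemma bounded_bilinear_matrix_mult:
  "bounded_bilinear ((**) :: real^'m^'n \<Rightarrow> real^'p^'m \<Rightarrow> real^'p^'n)"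
  unfolding bilinear_conv_bounded_bilinear[symmetric] bilinear_def
  by (auto intro!: linearI simp: matrix_add_ldistrib matrix_scalar_ac scalar_matrix_assoc
      vec_eq_iff matrix_matrix_mult_def sum.distrib sum_distrib_left algebra_simps)

interpretation matrix_mult: bounded_bilinear "(**) :: real^'m^'n \<Rightarrow> real^'p^'m \<Rightarrow> real^'p^'n"
  by (rule bounded_bilinear_matrix_mult)

lemma transpose_add: "transpose (A + B) = transpose A + transpose (B::real^'m^'n)"
  and transpose_diff: "transpose (A - B) = transpose A - transpose (B::real^'m^'n)"
  and transpose_minus: "transpose (- A) = - transpose (A::real^'m^'n)"
  by (simp_all add: vec_eq_iff transpose_def)

lemma transpose_nth: "transpose A $ i $ j = A $ j $ i"
  by (simp add: transpose_def)

lemma transpose_sum: "transpose (sum f A) = (\<Sum>x\<in>A. transpose (f x :: real^'m^'n))"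
  by (simp add: vec_eq_iff transpose_nth sum_component)

lemma bounded_linear_transpose: "bounded_linear (transpose :: real^'m^'n \<Rightarrow> real^'n^'m)"
  by (auto intro!: linearI simp: linear_conv_bounded_linear[symmetric] transpose_add
      transpose_scalar)

lemmas tendsto_transpose = bounded_linear.tendsto[OF bounded_linear_transpose]

lemma trace_transpose: "trace (transpose (A::real^'n^'n)) = trace A"
  by (simp add: trace_def transpose_def)

lemma trace_sum: "trace (sum f A) = (\<Sum>x\<in>A. trace (f x :: real^'n^'n))"
  by (simp add: trace_def sum_component) (rule sum.swap)

lemma trace_scaleR: "trace (c *\<^sub>R (A::real^'n^'n)) = c * trace A"
  by (simp add: trace_def sum_distrib_left)

lemma inner_matrix: "(A::real^'m^'n) \<bullet> B = (\<Sum>i\<in>UNIV. \<Sum>j\<in>UNIV. A $ i $ j * B $ i $ j)"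
  by (simp add: inner_vec_def inner_real_def)

lemma inner_matrix_eq_trace: "(A::real^'m^'n) \<bullet> B = trace (transpose A ** B)"
  by (simp add: inner_vec_def inner_real_def trace_def matrix_matrix_mult_def transpose_def)
    (rule sum.swap)

lemma trace_matrix_mult: "trace ((A::real^'m^'n) ** B) = transpose A \<bullet> B"
  by (simp add: inner_matrix_eq_trace)

lemma inner_mat_1: "(mat 1 :: real^'n^'n) \<bullet> A = trace A"
  by (simp add: inner_matrix_eq_trace)

lemma inner_matrix_mult_left: "((A::real^'m^'n) ** (B::real^'p^'m)) \<bullet> C = B \<bullet> (transpose A ** C)"
  by (simp add: inner_matrix_eq_trace matrix_transpose_mul matrix_mul_assoc)

lemma inner_transpose: "transpose (A::real^'m^'n) \<bullet> transpose B = A \<bullet> B"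
  using trace_mul_sym[of A "transpose B"] trace_transpose[of "transpose A ** B"]
  by (simp add: inner_matrix_eq_trace matrix_transpose_mul)

lemma trace_square_le: "(trace C)\<^sup>2 \<le> real CARD('p) * (C \<bullet> C)" for C :: "real^'p^'p"
  using Cauchy_Schwarz_ineq[of "mat 1 :: real^'p^'p" C] by (simp add: inner_mat_1 trace_I)

section \<open>The Stiefel manifold\<close>

lemma stiefel_transpose_mult_self: "S \<in> stiefel \<Longrightarrow> transpose S ** S = mat 1"
  by (simp add: stiefel_def)

lemma stiefel_mult_transpose_mult_self: "S \<in> stiefel \<Longrightarrow> X ** transpose S ** S = X"
  by (simp add: stiefel_def flip: matrix_mul_assoc)

lemma stiefel_inner_self: "(S::real^'p^'n) \<in> stiefel \<Longrightarrow> S \<bullet> S = real CARD('p)"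
  by (simp add: inner_matrix_eq_trace stiefel_def trace_I)

lemma inner_skew_mult_self:
  assumes "transpose X = - (X::real^'n^'n)"
  shows "(Y::real^'p^'n) \<bullet> (X ** Y) = 0"
proof -
  have "Y \<bullet> (X ** Y) = Y \<bullet> (transpose X ** Y)"
    by (metis inner_commute inner_matrix_mult_left)
  also have "\<dots> = - (Y \<bullet> (X ** Y))"
    by (simp add: assms matrix_mult.minus_left)
  finally show ?thesis by simp
qed

text \<open>Cayley transform: for skew \<open>X\<close>, \<open>(I + X)(I - X)\<^sup>-\<^sup>1\<close> is orthogonal, so it maps
  the Stiefel manifold to itself.\<close>

lemma cayley_transform:
  fixes X :: "real^'n^'n" and S :: "real^'p^'n"
  assumes skew: "transpose X = - X" and S: "S \<in> stiefel"
  obtains Y where "(mat 1 - X) ** Y = S" and "norm Y \<le> norm S"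
    and "(mat 1 + X) ** Y \<in> stiefel"
proof -
  let ?f = "\<lambda>Y::real^'p^'n. (mat 1 - X) ** Y"
  have lin: "linear ?f"
    by (simp add: bounded_linear.linear matrix_mult.bounded_linear_right)
  have inner_Y: "Y \<bullet> ?f Y = Y \<bullet> Y" for Y
    by (simp add: matrix_mult.diff_left inner_diff_right inner_skew_mult_self[OF skew])
  have "inj ?f"
    unfolding linear_injective_0[OF lin] by (metis inner_Y inner_zero_right inner_eq_zero_iff)
  then obtain Y where Y: "?f Y = S"
    using linear_injective_imp_surjective[OF lin] by (metis surjD)
  show thesis
  proof
    show "?f Y = S" by (fact Y)
    have "norm Y ^ 2 \<le> norm Y * norm S"
      using inner_Y[of Y] Y norm_cauchy_schwarz[of Y S] by (simp add: power2_norm_eq_inner)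
    then show "norm Y \<le> norm S"
      by (cases "norm Y = 0") (auto simp: power2_eq_square)
    have commute: "(mat 1 - X) ** (mat 1 + X) = (mat 1 + X) ** (mat 1 - X)"
      by (simp add: matrix_mult.diff_left matrix_mult.add_left matrix_add_ldistrib
          matrix_mult.diff_right)
    have "transpose ((mat 1 + X) ** Y) ** ((mat 1 + X) ** Y)
        = transpose Y ** ((mat 1 - X) ** (mat 1 + X)) ** Y"
      by (simp add: matrix_transpose_mul transpose_add skew matrix_mul_assoc)
    also have "\<dots> = (transpose Y ** (mat 1 + X)) ** ((mat 1 - X) ** Y)"
      by (simp add: commute matrix_mul_assoc)
    also have "transpose Y ** (mat 1 + X) = transpose S"
      by (simp add: Y[symmetric] matrix_transpose_mul transpose_diff skew)
    finally show "(mat 1 + X) ** Y \<in> stiefel"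
      using S Y by (simp add: stiefel_def)
  qed
qed

lemma tendsto_cayley_preimage:
  fixes \<Omega> :: "real^'n^'n" and S :: "real^'p^'n"
  assumes Y: "\<And>t. (mat 1 - (t/2) *\<^sub>R \<Omega>) ** Y t = S" and bound: "\<And>t. norm (Y t) \<le> norm S"
  shows "(Y \<longlongrightarrow> S) (at_right 0)"
proof -
  have Y_diff: "Y t - S = (t/2) *\<^sub>R (\<Omega> ** Y t)" for t
    using Y[of t] by (auto simp: matrix_mult.diff_left matrix_mult.scaleR_left)
  obtain K where K: "\<And>Z::real^'p^'n. norm (\<Omega> ** Z) \<le> norm Z * K" "K > 0"
    using matrix_mult.bounded_linear_right bounded_linear.pos_bounded by blast
  have "((\<lambda>t. Y t - S) \<longlongrightarrow> 0) (at_right 0)"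
  proof (rule Lim_null_comparison)
    show "\<forall>\<^sub>F t in at_right 0. norm (Y t - S) \<le> \<bar>t\<bar> / 2 * (norm S * K)"
    proof (intro always_eventually allI)
      fix t :: real
      have "norm (Y t - S) = \<bar>t\<bar> / 2 * norm (\<Omega> ** Y t)"
        by (simp add: Y_diff)
      also have "\<dots> \<le> \<bar>t\<bar> / 2 * (norm S * K)"
        using K(1)[of "Y t"] bound[of t] K(2)
        by (intro mult_left_mono) (auto intro: order_trans mult_right_mono)
      finally show "norm (Y t - S) \<le> \<bar>t\<bar> / 2 * (norm S * K)" .
    qed
    show "((\<lambda>t. \<bar>t\<bar> / 2 * (norm S * K)) \<longlongrightarrow> 0) (at_right 0)"
      by (rule tendsto_eq_intros tendsto_ident_at | simp)+
  qed
  then show ?thesis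
    by (simp add: LIM_zero_cancel)
qed

definition stiefel_tangent :: "real^'p^'n \<Rightarrow> real^'p^'n \<Rightarrow> bool" where
  "stiefel_tangent S D \<longleftrightarrow> transpose S ** D + transpose D ** S = 0"

lemma stiefel_tangent_minus:
  assumes "stiefel_tangent S D"
  shows "stiefel_tangent S (- D)"
proof -
  have "- (transpose S ** D + transpose D ** S) = 0"
    using assms by (simp add: stiefel_tangent_def)
  then show ?thesis
    by (simp add: stiefel_tangent_def transpose_minus matrix_mult.minus_left
        matrix_mult.minus_right)
qed

text \<open>The curve is the Cayley transform of \<open>S\<close> under \<open>(t/2) \<Omega>\<close>, where the skew matrix
  \<open>\<Omega>\<close> is chosen with \<open>\<Omega> S = \<Delta>\<close>.\<close>

lemma stiefel_tangent_curve:
  fixes S \<Delta> :: "real^'p^'n"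
  assumes S: "S \<in> stiefel" and tangent: "stiefel_tangent S \<Delta>"
  obtains E where "\<And>t. S + t *\<^sub>R E t \<in> stiefel" and "(E \<longlongrightarrow> \<Delta>) (at_right 0)"
proof -
  define \<Omega> :: "real^'n^'n" where
    "\<Omega> = \<Delta> ** transpose S - S ** transpose \<Delta> - S ** (transpose S ** \<Delta>) ** transpose S"
  have SS: "transpose S ** S = mat 1"
    using S by (rule stiefel_transpose_mult_self)
  have tD: "transpose \<Delta> ** S = - (transpose S ** \<Delta>)"
    using tangent by (simp add: stiefel_tangent_def eq_neg_iff_add_eq_0 add.commute)
  have "transpose \<Omega> = - \<Omega>"
    by (simp add: \<Omega>_def transpose_diff matrix_transpose_mul matrix_mul_assoc tD
        matrix_mult.minus_left matrix_mult.minus_right)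
  then have skew: "transpose ((t/2) *\<^sub>R \<Omega>) = - ((t/2) *\<^sub>R \<Omega>)" for t
    by (simp add: transpose_scalar)
  have \<Omega>S: "\<Omega> ** S = \<Delta>"
    by (simp add: \<Omega>_def matrix_mult.diff_left SS tD matrix_mult.minus_right
        flip: matrix_mul_assoc)
  have "\<forall>t. \<exists>Y. (mat 1 - (t/2) *\<^sub>R \<Omega>) ** Y = S \<and> norm Y \<le> norm S
      \<and> (mat 1 + (t/2) *\<^sub>R \<Omega>) ** Y \<in> stiefel"
    by (metis cayley_transform[OF skew S])
  then obtain Y where Y: "\<And>t. (mat 1 - (t/2) *\<^sub>R \<Omega>) ** Y t = S"
    and bound: "\<And>t. norm (Y t) \<le> norm S"
    and stiefel: "\<And>t. (mat 1 + (t/2) *\<^sub>R \<Omega>) ** Y t \<in> stiefel"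
    by metis
  have curve: "(mat 1 + (t/2) *\<^sub>R \<Omega>) ** Y t = S + t *\<^sub>R (\<Omega> ** Y t)" for t
  proof -
    have half: "t *\<^sub>R Z = (t/2) *\<^sub>R Z + (t/2) *\<^sub>R Z" for Z :: "real^'p^'n"
      by (simp flip: scaleR_add_left)
    have "(mat 1 + (t/2) *\<^sub>R \<Omega>) ** Y t = (mat 1 - (t/2) *\<^sub>R \<Omega>) ** Y t + t *\<^sub>R (\<Omega> ** Y t)"
      by (simp add: matrix_mult.add_left matrix_mult.diff_left matrix_mult.scaleR_left half)
    then show ?thesis
      by (simp add: Y)
  qed
  have "((\<lambda>t. \<Omega> ** Y t) \<longlongrightarrow> \<Omega> ** S) (at_right 0)"
    by (intro matrix_mult.tendsto tendsto_const tendsto_cayley_preimage[OF Y bound])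
  then show thesis
    using that[of "\<lambda>t. \<Omega> ** Y t"] curve stiefel \<Omega>S by metis
qed

lemma stiefel_tangent_chord_correction:
  assumes S: "S \<in> stiefel" and SD: "S + D \<in> stiefel"
  shows "stiefel_tangent S (D + (1/2) *\<^sub>R (S ** (transpose D ** D)))"
proof -
  let ?M = "transpose D ** D"
  have SS: "transpose S ** S = mat 1"
    using S by (rule stiefel_transpose_mult_self)
  have "transpose (S + D) ** (S + D) = mat 1"
    using SD by (rule stiefel_transpose_mult_self)
  then have chord: "transpose S ** D + transpose D ** S + ?M = 0"
    by (simp add: transpose_add matrix_add_ldistrib matrix_mult.add_left SS algebra_simps)
  have "transpose S ** (S ** ?M) = ?M"
    by (simp add: matrix_mul_assoc SS)
  moreover have "transpose (S ** ?M) ** S = ?M"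
    by (simp add: matrix_transpose_mul SS flip: matrix_mul_assoc)
  ultimately show ?thesis
    using chord by (simp add: stiefel_tangent_def transpose_add transpose_scalar matrix_add_ldistrib
        matrix_mult.add_left matrix_mult.scaleR_left matrix_mult.scaleR_right algebra_simps
        flip: scaleR_add_left)
qed

definition stiefel_proj :: "real^'p^'n \<Rightarrow> real^'p^'n \<Rightarrow> real^'p^'n" where
  "stiefel_proj S V = V - (1/2) *\<^sub>R (S ** (transpose S ** V + transpose V ** S))"

lemma stiefel_proj_expand:
  "stiefel_proj S V = V - (1/2) *\<^sub>R (S ** transpose S ** V) - (1/2) *\<^sub>R (S ** transpose V ** S)"
  unfolding stiefel_proj_def by (simp add: matrix_add_ldistrib matrix_mul_assoc algebra_simps)

lemma stiefel_tangent_proj: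
  assumes S: "S \<in> stiefel"
  shows "stiefel_tangent S (stiefel_proj S V)"
proof -
  define M where "M = transpose S ** V + transpose V ** S"
  have SS: "transpose S ** S = mat 1"
    using S by (rule stiefel_transpose_mult_self)
  have "transpose M = M"
    by (simp add: M_def transpose_add matrix_transpose_mul)
  then have "transpose (stiefel_proj S V) ** S = transpose V ** S - (1/2) *\<^sub>R M"
    by (simp add: stiefel_proj_def M_def[symmetric] transpose_diff transpose_scalar
        matrix_transpose_mul matrix_mult.diff_left matrix_mult.scaleR_left SS
        flip: matrix_mul_assoc)
  moreover have "transpose S ** stiefel_proj S V = transpose S ** V - (1/2) *\<^sub>R M"
    by (simp add: stiefel_proj_def M_def[symmetric] matrix_mult.diff_right
        matrix_mult.scaleR_right SS matrix_mul_assoc)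
  ultimately have "transpose S ** stiefel_proj S V + transpose (stiefel_proj S V) ** S
      = (transpose S ** V + transpose V ** S) - (1/2 + 1/2) *\<^sub>R M"
    by (simp only: scaleR_add_left) (simp add: algebra_simps)
  then show ?thesis
    by (simp add: stiefel_tangent_def M_def)
qed

section \<open>Variations of the potential at a local minimizer\<close>

definition edge_pairs :: "(nat \<times> nat) set \<Rightarrow> (nat \<times> nat) set" where
  "edge_pairs E = {(i,j). (i,j) \<in> E \<and> i < j}"

lemma edge_pairs_subset: "undirected_graph N E \<Longrightarrow> edge_pairs E \<subseteq> {1..N} \<times> {1..N}"
  by (auto simp: edge_pairs_def undirected_graph_def)

lemma finite_edge_pairs: "undirected_graph N E \<Longrightarrow> finite (edge_pairs E)"
  using edge_pairs_subset finite_subset by blast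

definition edge_inner ::
  "(nat \<times> nat) set \<Rightarrow> (nat \<Rightarrow> real^'p^'n) \<Rightarrow> (nat \<Rightarrow> real^'p^'n) \<Rightarrow> real" where
  "edge_inner E X Y = (\<Sum>(i,j)\<in>edge_pairs E. X i \<bullet> Y j)"

definition first_variation ::
  "(nat \<times> nat) set \<Rightarrow> (nat \<Rightarrow> real^'p^'n) \<Rightarrow> (nat \<Rightarrow> real^'p^'n) \<Rightarrow> real" where
  "first_variation E S D = edge_inner E D S + edge_inner E S D"

text \<open>At a critical point \<open>S\<close>, this is the exact increase of the potential from \<open>S\<close> to any
  configuration \<open>S + D\<close> (\<open>local_minimizer_potential_diff\<close>): the Stiefel constraint forces
  the normal component \<open>-S\<^sub>i D\<^sub>i\<^sup>T D\<^sub>i / 2\<close> of \<open>D\<^sub>i\<close>, which the first-order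
  condition converts into the first term.\<close>

definition second_variation ::
  "(nat \<times> nat) set \<Rightarrow> (nat \<Rightarrow> real^'p^'n) \<Rightarrow> (nat \<Rightarrow> real^'p^'n) \<Rightarrow> real" where
  "second_variation E S D =
     first_variation E S (\<lambda>i. S i ** (transpose (D i) ** D i)) / 2 - edge_inner E D D"

lemma potential_add:
  "potential E (\<lambda>i. S i + D i) = potential E S - first_variation E S D - edge_inner E D D"
  unfolding potential_def first_variation_def edge_inner_def edge_pairs_def
  by (simp add: split_def inner_add_left inner_add_right sum.distrib sum_subtractf
      flip: sum_negf)

lemma edge_inner_add_right: "edge_inner E X (\<lambda>i. Y i + Z i) = edge_inner E X Y + edge_inner E X Z"
  and edge_inner_add_left: "edge_inner E (\<lambda>i. Y i + Z i) X = edge_inner E Y X + edge_inner E Z X"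
  by (simp_all add: edge_inner_def split_def inner_add_left inner_add_right sum.distrib)

lemma edge_inner_scaleR_right: "edge_inner E X (\<lambda>i. c *\<^sub>R Y i) = c * edge_inner E X Y"
  and edge_inner_scaleR_left: "edge_inner E (\<lambda>i. c *\<^sub>R Y i) X = c * edge_inner E Y X"
  by (simp_all add: edge_inner_def split_def sum_distrib_left)

lemma first_variation_add:
  "first_variation E S (\<lambda>i. D i + D' i) = first_variation E S D + first_variation E S D'"
  by (simp add: first_variation_def edge_inner_add_left edge_inner_add_right)

lemma first_variation_scaleR:
  "first_variation E S (\<lambda>i. c *\<^sub>R D i) = c * first_variation E S D"
  by (simp add: first_variation_def edge_inner_scaleR_left edge_inner_scaleR_right algebra_simps)

lemma second_variation_scaleR:
  "second_variation E S (\<lambda>i. c *\<^sub>R D i) = c\<^sup>2 * second_variation E S D"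
  by (simp add: second_variation_def transpose_scalar matrix_mult.scaleR_left
      matrix_mult.scaleR_right first_variation_scaleR edge_inner_scaleR_left
      edge_inner_scaleR_right power2_eq_square algebra_simps)

lemma second_variation_eq_edge_sum:
  "second_variation E S D = (\<Sum>(i,j)\<in>edge_pairs E.
     ((S i ** (transpose (D i) ** D i)) \<bullet> S j + S i \<bullet> (S j ** (transpose (D j) ** D j))) / 2
     - D i \<bullet> D j)"
  by (simp add: second_variation_def first_variation_def edge_inner_def split_def sum.distrib
      sum_subtractf sum_divide_distrib add_divide_distrib)

lemma tendsto_edge_inner:
  assumes "edge_pairs E \<subseteq> V \<times> V"
    and "\<And>i. i \<in> V \<Longrightarrow> (X i \<longlongrightarrow> X' i) F"
    and "\<And>i. i \<in> V \<Longrightarrow> (Y i \<longlongrightarrow> Y' i) F"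
  shows "((\<lambda>t. edge_inner E (\<lambda>i. X i t) (\<lambda>i. Y i t)) \<longlongrightarrow> edge_inner E X' Y') F"
  unfolding edge_inner_def split_def
  using assms by (intro tendsto_sum tendsto_inner) auto

lemma tendsto_first_variation:
  assumes "edge_pairs E \<subseteq> V \<times> V" and "\<And>i. i \<in> V \<Longrightarrow> (D i \<longlongrightarrow> D' i) F"
  shows "((\<lambda>t. first_variation E S (\<lambda>i. D i t)) \<longlongrightarrow> first_variation E S D') F"
  unfolding first_variation_def
  using assms by (intro tendsto_intros tendsto_edge_inner[of E V]) auto

lemma tendsto_second_variation:
  assumes "edge_pairs E \<subseteq> V \<times> V" and "\<And>i. i \<in> V \<Longrightarrow> (D i \<longlongrightarrow> D' i) F"
  shows "((\<lambda>t. second_variation E S (\<lambda>i. D i t)) \<longlongrightarrow> second_variation E S D') F"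
  unfolding second_variation_def first_variation_def
  using assms
  by (intro tendsto_intros tendsto_edge_inner[of E V] matrix_mult.tendsto tendsto_transpose) auto

lemma local_minimizer_stiefel: "local_minimizer N E S \<Longrightarrow> i \<in> {1..N} \<Longrightarrow> S i \<in> stiefel"
  by (simp add: local_minimizer_def config_space_def)

lemma local_minimizer_tangent_curve:
  fixes S \<Delta> :: "nat \<Rightarrow> real^'p^'n"
  assumes LM: "local_minimizer N E S"
    and tangent: "\<And>i. i \<in> {1..N} \<Longrightarrow> stiefel_tangent (S i) (\<Delta> i)"
  obtains F where "\<And>i. i \<in> {1..N} \<Longrightarrow> (F i \<longlongrightarrow> \<Delta> i) (at_right 0)"
    and "\<forall>\<^sub>F t in at_right 0. (\<lambda>i. S i + t *\<^sub>R F i t) \<in> config_space N \<and>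
           potential E S \<le> potential E (\<lambda>i. S i + t *\<^sub>R F i t)"
proof -
  obtain \<epsilon> where "\<epsilon> > 0" and min: "\<And>S'. S' \<in> config_space N \<Longrightarrow>
      \<forall>i\<in>{1..N}. dist (S' i) (S i) < \<epsilon> \<Longrightarrow> potential E S \<le> potential E S'"
    using LM unfolding local_minimizer_def by blast
  note S = local_minimizer_stiefel[OF LM]
  have "\<forall>i\<in>{1..N}. \<exists>F. (\<forall>t. S i + t *\<^sub>R F t \<in> stiefel) \<and> (F \<longlongrightarrow> \<Delta> i) (at_right 0)"
    by (metis stiefel_tangent_curve S tangent)
  then obtain F where F_stiefel: "\<And>i t. i \<in> {1..N} \<Longrightarrow> S i + t *\<^sub>R F i t \<in> stiefel"
    and F_lim: "\<And>i. i \<in> {1..N} \<Longrightarrow> (F i \<longlongrightarrow> \<Delta> i) (at_right 0)"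
    by metis
  have "\<forall>\<^sub>F t in at_right 0. dist (S i + t *\<^sub>R F i t) (S i) < \<epsilon>" if "i \<in> {1..N}" for i
  proof -
    have "((\<lambda>t. t *\<^sub>R F i t) \<longlongrightarrow> 0 *\<^sub>R \<Delta> i) (at_right 0)"
      by (intro tendsto_scaleR tendsto_ident_at F_lim that)
    then show ?thesis
      using \<open>\<epsilon> > 0\<close> by (auto simp: dist_norm dest: tendstoD)
  qed
  then have "\<forall>\<^sub>F t in at_right 0. \<forall>i\<in>{1..N}. dist (S i + t *\<^sub>R F i t) (S i) < \<epsilon>"
    by (simp add: eventually_ball_finite)
  then have "\<forall>\<^sub>F t in at_right 0. (\<lambda>i. S i + t *\<^sub>R F i t) \<in> config_space N \<and>
           potential E S \<le> potential E (\<lambda>i. S i + t *\<^sub>R F i t)"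
    by eventually_elim (use F_stiefel min in \<open>auto simp: config_space_def\<close>)
  with F_lim that show thesis by blast
qed

lemma local_minimizer_first_variation_nonpos:
  fixes S \<Delta> :: "nat \<Rightarrow> real^'p^'n"
  assumes G: "undirected_graph N E" and LM: "local_minimizer N E S"
    and tangent: "\<And>i. i \<in> {1..N} \<Longrightarrow> stiefel_tangent (S i) (\<Delta> i)"
  shows "first_variation E S \<Delta> \<le> 0"
proof -
  obtain F where F_lim: "\<And>i. i \<in> {1..N} \<Longrightarrow> (F i \<longlongrightarrow> \<Delta> i) (at_right 0)"
    and min: "\<forall>\<^sub>F t in at_right 0. (\<lambda>i. S i + t *\<^sub>R F i t) \<in> config_space N \<and>
           potential E S \<le> potential E (\<lambda>i. S i + t *\<^sub>R F i t)"
    using local_minimizer_tangent_curve[OF LM tangent] by blast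
  have "\<forall>\<^sub>F t in at_right 0.
      0 \<le> - first_variation E S (\<lambda>i. F i t) - t * edge_inner E (\<lambda>i. F i t) (\<lambda>i. F i t)"
    using min eventually_at_right_less[of 0]
  proof eventually_elim
    case (elim t)
    then have "0 \<le> potential E (\<lambda>i. S i + t *\<^sub>R F i t) - potential E S"
      by simp
    also have "\<dots> = t * (- first_variation E S (\<lambda>i. F i t)
        - t * edge_inner E (\<lambda>i. F i t) (\<lambda>i. F i t))"
      by (simp add: potential_add first_variation_scaleR edge_inner_scaleR_left
          edge_inner_scaleR_right algebra_simps)
    finally show ?case
      using elim by (simp add: zero_le_mult_iff)
  qed
  moreover have "((\<lambda>t. - first_variation E S (\<lambda>i. F i t) - t * edge_inner E (\<lambda>i. F i t) (\<lambda>i. F i t))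
      \<longlongrightarrow> - first_variation E S \<Delta> - 0 * edge_inner E \<Delta> \<Delta>) (at_right 0)"
    using edge_pairs_subset[OF G] F_lim
    by (intro tendsto_diff tendsto_minus tendsto_mult tendsto_ident_at tendsto_first_variation
        tendsto_edge_inner)
  ultimately have "0 \<le> - first_variation E S \<Delta> - 0 * edge_inner E \<Delta> \<Delta>"
    by (intro tendsto_lowerbound) auto
  then show ?thesis
    by simp
qed

lemma local_minimizer_first_variation:
  fixes S \<Delta> :: "nat \<Rightarrow> real^'p^'n"
  assumes G: "undirected_graph N E" and LM: "local_minimizer N E S"
    and tangent: "\<And>i. i \<in> {1..N} \<Longrightarrow> stiefel_tangent (S i) (\<Delta> i)"
  shows "first_variation E S \<Delta> = 0"
  using local_minimizer_first_variation_nonpos[OF G LM tangent]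
    local_minimizer_first_variation_nonpos[OF G LM stiefel_tangent_minus[OF tangent]]
    first_variation_scaleR[of E S "-1" \<Delta>]
  by simp

lemma local_minimizer_potential_diff:
  fixes S D :: "nat \<Rightarrow> real^'p^'n"
  assumes G: "undirected_graph N E" and LM: "local_minimizer N E S"
    and SD: "(\<lambda>i. S i + D i) \<in> config_space N"
  shows "potential E (\<lambda>i. S i + D i) - potential E S = second_variation E S D"
proof -
  have "stiefel_tangent (S i) (D i + (1/2) *\<^sub>R (S i ** (transpose (D i) ** D i)))"
    if "i \<in> {1..N}" for i
    using SD that local_minimizer_stiefel[OF LM]
    by (intro stiefel_tangent_chord_correction) (auto simp: config_space_def)
  then have "first_variation E S (\<lambda>i. D i + (1/2) *\<^sub>R (S i ** (transpose (D i) ** D i))) = 0"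
    by (rule local_minimizer_first_variation[OF G LM])
  then have "first_variation E S D
      = - first_variation E S (\<lambda>i. S i ** (transpose (D i) ** D i)) / 2"
    by (simp add: first_variation_add first_variation_scaleR)
  then show ?thesis
    by (simp add: potential_add second_variation_def)
qed

lemma local_minimizer_second_variation:
  fixes S \<Delta> :: "nat \<Rightarrow> real^'p^'n"
  assumes G: "undirected_graph N E" and LM: "local_minimizer N E S"
    and tangent: "\<And>i. i \<in> {1..N} \<Longrightarrow> stiefel_tangent (S i) (\<Delta> i)"
  shows "0 \<le> second_variation E S \<Delta>"
proof -
  obtain F where F_lim: "\<And>i. i \<in> {1..N} \<Longrightarrow> (F i \<longlongrightarrow> \<Delta> i) (at_right 0)"
    and min: "\<forall>\<^sub>F t in at_right 0. (\<lambda>i. S i + t *\<^sub>R F i t) \<in> config_space N \<and>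
           potential E S \<le> potential E (\<lambda>i. S i + t *\<^sub>R F i t)"
    using local_minimizer_tangent_curve[OF LM tangent] by blast
  have "\<forall>\<^sub>F t in at_right 0. 0 \<le> second_variation E S (\<lambda>i. F i t)"
    using min eventually_at_right_less[of 0]
  proof eventually_elim
    case (elim t)
    then have "0 \<le> second_variation E S (\<lambda>i. t *\<^sub>R F i t)"
      using local_minimizer_potential_diff[OF G LM, of "\<lambda>i. t *\<^sub>R F i t"] by simp
    then show ?case
      using elim by (simp add: second_variation_scaleR zero_le_mult_iff)
  qed
  moreover have "((\<lambda>t. second_variation E S (\<lambda>i. F i t)) \<longlongrightarrow> second_variation E S \<Delta>) (at_right 0)"
    using edge_pairs_subset[OF G] F_lim by (rule tendsto_second_variation)
  ultimately show ?thesis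
    by (intro tendsto_lowerbound) auto
qed

section \<open>Sums over matrix units\<close>

definition matrix_unit :: "'n \<Rightarrow> 'p \<Rightarrow> real^'p^'n" where
  "matrix_unit a b = (\<chi> k l. if k = a \<and> l = b then 1 else 0)"

definition unit_sum :: "(real^'p^'n \<Rightarrow> 'a::comm_monoid_add) \<Rightarrow> 'a" where
  "unit_sum f = (\<Sum>a\<in>UNIV. \<Sum>b\<in>UNIV. f (matrix_unit a b))"

lemma unit_sum_add: "unit_sum (\<lambda>V. f V + g V) = unit_sum f + unit_sum g"
  and unit_sum_diff:
    "unit_sum (\<lambda>V. f' V - g' V) = unit_sum f' - unit_sum (g' :: _ \<Rightarrow> 'b::ab_group_add)"
  and unit_sum_scaleR: "unit_sum (\<lambda>V. c *\<^sub>R h V) = c *\<^sub>R unit_sum (h :: _ \<Rightarrow> 'c::real_vector)"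
  and unit_sum_mult: "unit_sum (\<lambda>V. c * k V) = c * unit_sum k"
  and unit_sum_divide: "unit_sum (\<lambda>V. k V / c) = unit_sum k / c"
  by (simp_all add: unit_sum_def sum.distrib sum_subtractf scaleR_sum_right sum_distrib_left
      sum_divide_distrib)

lemma unit_sum_trace:
  "unit_sum (\<lambda>V. trace (f V)) = trace (unit_sum f :: real^'m^'m)"
  by (simp add: unit_sum_def trace_sum)

lemma matrix_unit_nth: "matrix_unit a b $ k $ l = (if k = a \<and> l = b then 1 else 0)"
  by (simp add: matrix_unit_def)

lemma matrix_mult_unit_nth: "(X ** matrix_unit a b) $ i $ l = (if l = b then X $ i $ a else 0)"
  and matrix_mult_unit_transpose_nth:
    "(Z ** transpose (matrix_unit a b)) $ i $ k = (if k = a then Z $ i $ b else 0)"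
  and matrix_unit_transpose_mult_nth:
    "(transpose (matrix_unit a b) ** W) $ l $ j = (if l = b then W $ a $ j else 0)"
  by (simp_all add: matrix_matrix_mult_def matrix_unit_def transpose_def if_distrib if_distribR
      cong: if_cong)

lemma transpose_matrix_unit: "transpose (matrix_unit a b) = matrix_unit b a"
  by (auto simp: vec_eq_iff transpose_nth matrix_unit_nth)

lemma unit_sum_transpose:
  "unit_sum (\<lambda>V::real^'p^'n. f (transpose V)) = unit_sum (f :: real^'n^'p \<Rightarrow> 'a::comm_monoid_add)"
  unfolding unit_sum_def transpose_matrix_unit by (rule sum.swap)

lemma matrix_unit_expansion:
  "(\<Sum>a\<in>UNIV. \<Sum>b\<in>UNIV. A $ a $ b *\<^sub>R matrix_unit a b) = (A::real^'p^'n)"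
proof -
  have "A $ a $ b * (if i = a \<and> j = b then 1 else 0)
      = (if j = b then if i = a then A $ i $ j else 0 else 0)" for i j a b
    by auto
  then show ?thesis
    by (simp add: vec_eq_iff sum_component matrix_unit_nth)
qed

lemma transpose_unit_mult_transpose_unit:
  "transpose (matrix_unit a b) ** A ** transpose (matrix_unit a b)
     = A $ a $ b *\<^sub>R transpose (matrix_unit a b :: real^'p^'n)"
  by (auto simp: vec_eq_iff matrix_mult_unit_transpose_nth matrix_unit_transpose_mult_nth
      transpose_nth matrix_unit_nth)

lemma unit_sum_transpose_mult_mult:
  "unit_sum (\<lambda>V::real^'p^'n. transpose V ** M ** V) = trace M *\<^sub>R mat 1"
  by (simp add: unit_sum_def vec_eq_iff sum_component matrix_mult_unit_nth
      matrix_unit_transpose_mult_nth trace_def mat_def)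

lemma unit_sum_transpose_mult_transpose_mult:
  "unit_sum (\<lambda>V::real^'p^'n. transpose V ** A ** transpose V ** B) = transpose A ** B"
proof -
  have "unit_sum (\<lambda>V::real^'p^'n. transpose V ** A ** transpose V ** B)
      = (\<Sum>a\<in>UNIV. \<Sum>b\<in>UNIV. A $ a $ b *\<^sub>R transpose (matrix_unit a b :: real^'p^'n)) ** B"
    by (simp add: unit_sum_def transpose_unit_mult_transpose_unit matrix_mult.sum_left
        matrix_mult.scaleR_left)
  also have "(\<Sum>a\<in>UNIV. \<Sum>b\<in>UNIV. A $ a $ b *\<^sub>R transpose (matrix_unit a b :: real^'p^'n))
      = (\<Sum>b\<in>UNIV. \<Sum>a\<in>UNIV. transpose A $ b $ a *\<^sub>R matrix_unit b a)"
    by (simp add: transpose_matrix_unit transpose_nth) (rule sum.swap)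
  finally show ?thesis
    by (simp only: matrix_unit_expansion)
qed

lemma unit_sum_mult_transpose:
  "unit_sum (\<lambda>V::real^'p^'n. V ** transpose V) = real CARD('p) *\<^sub>R mat 1"
proof -
  have "unit_sum (\<lambda>W::real^'n^'p. transpose W ** mat 1 ** W) = real CARD('p) *\<^sub>R mat 1"
    by (simp only: unit_sum_transpose_mult_mult trace_I)
  then show ?thesis
    using unit_sum_transpose[of "\<lambda>W::real^'n^'p. transpose W ** W"] by simp
qed

lemma unit_sum_inner_mult:
  "unit_sum (\<lambda>V::real^'p^'n. V \<bullet> (M ** V)) = real CARD('p) * trace M"
proof -
  have "unit_sum (\<lambda>V::real^'p^'n. V \<bullet> (M ** V))
      = trace (unit_sum (\<lambda>V::real^'p^'n. transpose V ** M ** V))"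
    by (simp add: inner_matrix_eq_trace matrix_mul_assoc flip: unit_sum_trace)
  then show ?thesis
    by (simp add: unit_sum_transpose_mult_mult trace_scaleR trace_I)
qed

lemma unit_sum_inner_mult_transpose_mult:
  "unit_sum (\<lambda>V::real^'p^'n. V \<bullet> (A ** transpose V ** B)) = A \<bullet> B"
proof -
  have "unit_sum (\<lambda>V::real^'p^'n. V \<bullet> (A ** transpose V ** B))
      = trace (unit_sum (\<lambda>V::real^'p^'n. transpose V ** A ** transpose V ** B))"
    by (simp add: inner_matrix_eq_trace matrix_mul_assoc flip: unit_sum_trace)
  then show ?thesis
    by (simp add: unit_sum_transpose_mult_transpose_mult inner_matrix_eq_trace)
qed

lemma unit_sum_inner_sandwich:
  "unit_sum (\<lambda>V::real^'p^'n. (S ** transpose V ** S) \<bullet> (T ** transpose V ** T)) = (S \<bullet> T)\<^sup>2"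
proof -
  have nth: "(X ** transpose (matrix_unit a b) ** Y) $ i $ j = X $ i $ b * Y $ a $ j"
    for X Y :: "real^'p^'n" and a b i j
    by (simp add: matrix_matrix_mult_def[of _ Y] matrix_mult_unit_transpose_nth if_distrib
        if_distribR cong: if_cong)
  have "(S ** transpose (matrix_unit a b) ** S) \<bullet> (T ** transpose (matrix_unit a b) ** T)
      = (\<Sum>i\<in>UNIV. S $ i $ b * T $ i $ b) * (\<Sum>j\<in>UNIV. S $ a $ j * T $ a $ j)" for a b
    unfolding inner_matrix nth sum_product by (intro sum.cong refl) (simp add: mult_ac)
  then have "unit_sum (\<lambda>V::real^'p^'n. (S ** transpose V ** S) \<bullet> (T ** transpose V ** T))
      = (\<Sum>b\<in>UNIV. \<Sum>i\<in>UNIV. S $ i $ b * T $ i $ b) * (\<Sum>a\<in>UNIV. \<Sum>j\<in>UNIV. S $ a $ j * T $ a $ j)"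
    by (simp add: unit_sum_def sum_product) (rule sum.swap)
  also have "(\<Sum>b\<in>UNIV. \<Sum>i\<in>UNIV. S $ i $ b * T $ i $ b) = S \<bullet> T"
    unfolding inner_matrix by (rule sum.swap)
  finally show ?thesis
    by (simp add: inner_matrix power2_eq_square)
qed

lemma transpose_proj_mult_proj:
  assumes S: "S \<in> stiefel"
  shows "transpose (stiefel_proj S V) ** stiefel_proj S V = transpose V ** V
     - (3/4) *\<^sub>R (transpose V ** S ** transpose S ** V)
     - (1/4) *\<^sub>R (transpose V ** S ** transpose V ** S)
     - (1/4) *\<^sub>R (transpose S ** V ** transpose S ** V)
     + (1/4) *\<^sub>R (transpose S ** V ** transpose V ** S)"
  unfolding stiefel_proj_expand
  by (simp only: matrix_mult.diff_left matrix_mult.diff_right matrix_mult.scaleR_left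
      matrix_mult.scaleR_right transpose_diff transpose_scalar matrix_transpose_mul
      transpose_transpose matrix_mul_assoc stiefel_mult_transpose_mult_self[OF S]
      stiefel_transpose_mult_self[OF S] matrix_mul_lid)
    (simp add: algebra_simps, simp flip: scaleR_add_left)

lemma unit_sum_proj_gram:
  fixes S :: "real^'p^'n"
  assumes S: "S \<in> stiefel"
  shows "unit_sum (\<lambda>V. transpose (stiefel_proj S V) ** stiefel_proj S V)
    = (real CARD('n) - real CARD('p) / 2 - 1 / 2) *\<^sub>R mat 1"
proof -
  have SS: "transpose S ** S = mat 1"
    using S by (rule stiefel_transpose_mult_self)
  have "unit_sum (\<lambda>V::real^'p^'n. transpose V ** mat 1 ** V) = real CARD('n) *\<^sub>R mat 1"
    by (simp only: unit_sum_transpose_mult_mult trace_I)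
  then have gram: "unit_sum (\<lambda>V::real^'p^'n. transpose V ** V) = real CARD('n) *\<^sub>R mat 1"
    by simp
  have "trace (S ** transpose S) = real CARD('p)"
    by (simp add: trace_mul_sym SS trace_I)
  then have proj: "unit_sum (\<lambda>V::real^'p^'n. transpose V ** S ** transpose S ** V)
      = real CARD('p) *\<^sub>R mat 1"
    using unit_sum_transpose_mult_mult[of "S ** transpose S"] by (simp add: matrix_mul_assoc)
  have twist: "unit_sum (\<lambda>V::real^'p^'n. transpose V ** S ** transpose V ** S) = mat 1"
    by (simp add: unit_sum_transpose_mult_transpose_mult SS)
  have "transpose (unit_sum (\<lambda>V::real^'p^'n. transpose V ** S ** transpose V ** S))
      = unit_sum (\<lambda>V::real^'p^'n. transpose S ** V ** transpose S ** V)"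
    by (simp add: unit_sum_def transpose_sum matrix_transpose_mul matrix_mul_assoc)
  then have twist_transpose: "unit_sum (\<lambda>V::real^'p^'n. transpose S ** V ** transpose S ** V) = mat 1"
    by (simp add: twist)
  have "unit_sum (\<lambda>V::real^'p^'n. transpose S ** V ** transpose V ** S)
      = transpose S ** unit_sum (\<lambda>V::real^'p^'n. V ** transpose V) ** S"
    by (simp add: unit_sum_def matrix_mult.sum_left matrix_mult.sum_right matrix_mul_assoc)
  then have outer: "unit_sum (\<lambda>V::real^'p^'n. transpose S ** V ** transpose V ** S)
      = real CARD('p) *\<^sub>R mat 1"
    by (simp add: unit_sum_mult_transpose matrix_mult.scaleR_left matrix_mult.scaleR_right SS)
  show ?thesis
    by (simp add: transpose_proj_mult_proj[OF S] unit_sum_add unit_sum_diff unit_sum_scaleR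
        gram proj twist twist_transpose outer algebra_simps flip: scaleR_add_left scaleR_diff_left)
qed

lemma unit_sum_proj_gram_inner:
  fixes S T :: "real^'p^'n"
  assumes S: "S \<in> stiefel"
  shows "unit_sum (\<lambda>V. (S ** (transpose (stiefel_proj S V) ** stiefel_proj S V)) \<bullet> T)
    = (real CARD('n) - real CARD('p) / 2 - 1 / 2) * (S \<bullet> T)"
proof -
  have "unit_sum (\<lambda>V. (S ** (transpose (stiefel_proj S V) ** stiefel_proj S V)) \<bullet> T)
      = unit_sum (\<lambda>V. transpose (stiefel_proj S V) ** stiefel_proj S V) \<bullet> (transpose S ** T)"
    by (simp add: inner_matrix_mult_left unit_sum_def inner_sum_left)
  then show ?thesis
    by (simp add: unit_sum_proj_gram[OF S] inner_mat_1 trace_matrix_mult)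
qed

lemma inner_proj_proj:
  fixes S T V :: "real^'p^'n"
  shows "stiefel_proj S V \<bullet> stiefel_proj T V = V \<bullet> V
     - (1/2) * (V \<bullet> (T ** transpose T ** V)) - (1/2) * (V \<bullet> (T ** transpose V ** T))
     - (1/2) * (V \<bullet> (S ** transpose S ** V)) - (1/2) * (V \<bullet> (S ** transpose V ** S))
     + (1/4) * (V \<bullet> (S ** transpose S ** T ** transpose T ** V))
     + (1/4) * (V \<bullet> (S ** transpose S ** T ** transpose V ** T))
     + (1/4) * (V \<bullet> (T ** transpose T ** S ** transpose V ** S))
     + (1/4) * ((S ** transpose V ** S) \<bullet> (T ** transpose V ** T))"
proof -
  have self_adjoint: "(A ** transpose A ** X) \<bullet> Y = X \<bullet> (A ** transpose A ** Y)"
    for A :: "real^'p^'n" and X Y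
    using inner_matrix_mult_left[of "A ** transpose A" X Y] by (simp add: matrix_transpose_mul)
  have "(S ** transpose S ** V) \<bullet> (T ** transpose T ** V)
      = V \<bullet> (S ** transpose S ** T ** transpose T ** V)"
    and "(S ** transpose S ** V) \<bullet> (T ** transpose V ** T)
      = V \<bullet> (S ** transpose S ** T ** transpose V ** T)"
    and "(S ** transpose V ** S) \<bullet> (T ** transpose T ** V)
      = V \<bullet> (T ** transpose T ** S ** transpose V ** S)"
    by (simp_all add: self_adjoint matrix_mul_assoc inner_commute[of "S ** transpose V ** S"])
  moreover have "(S ** transpose S ** V) \<bullet> V = V \<bullet> (S ** transpose S ** V)"
    and "(S ** transpose V ** S) \<bullet> V = V \<bullet> (S ** transpose V ** S)"
    by (simp_all add: inner_commute)
  ultimately show ?thesis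
    unfolding stiefel_proj_expand
    by (simp only: inner_diff_left inner_diff_right inner_scaleR_left inner_scaleR_right)
      (simp add: algebra_simps)
qed

lemma inner_mult_transpose_mult_self:
  "(S ** transpose S ** T) \<bullet> T = (transpose S ** T) \<bullet> (transpose (S::real^'p^'n) ** T)"
  using inner_matrix_mult_left[of S "transpose S ** T" T] by (simp add: matrix_mul_assoc)

lemma unit_sum_inner_proj_proj:
  fixes S T :: "real^'p^'n"
  assumes S: "S \<in> stiefel" and T: "T \<in> stiefel"
  shows "unit_sum (\<lambda>V. stiefel_proj S V \<bullet> stiefel_proj T V)
     = real CARD('p) * real CARD('n) - (real CARD('p))\<^sup>2 - real CARD('p)
       + ((real CARD('p) + 2) * ((transpose S ** T) \<bullet> (transpose S ** T)) + (S \<bullet> T)\<^sup>2) / 4"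
proof -
  let ?p = "real CARD('p)" and ?x = "(transpose S ** T) \<bullet> (transpose S ** T)"
  have x_sym: "(transpose T ** S) \<bullet> (transpose T ** S) = ?x"
  proof -
    have "transpose T ** S = transpose (transpose S ** T)"
      by (simp add: matrix_transpose_mul)
    then show ?thesis
      by (simp only: inner_transpose)
  qed
  have norms: "unit_sum (\<lambda>V::real^'p^'n. V \<bullet> V) = ?p * real CARD('n)"
    using unit_sum_inner_mult[of "mat 1 :: real^'n^'n"] by (simp add: trace_I)
  have proj: "unit_sum (\<lambda>V::real^'p^'n. V \<bullet> (A ** transpose A ** V)) = ?p * ?p"
    if "A \<in> stiefel" for A :: "real^'p^'n"
    using unit_sum_inner_mult[of "A ** transpose A"] that
    by (simp add: matrix_mul_assoc trace_mul_sym stiefel_transpose_mult_self trace_I)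
  have sandwich: "unit_sum (\<lambda>V::real^'p^'n. V \<bullet> (A ** transpose V ** A)) = ?p"
    if "A \<in> stiefel" for A :: "real^'p^'n"
    using that by (simp add: unit_sum_inner_mult_transpose_mult stiefel_inner_self)
  have "trace (S ** transpose S ** T ** transpose T)
      = trace (transpose T ** S ** (transpose S ** T))"
    using trace_mul_sym[of "S ** transpose S ** T" "transpose T"] by (simp add: matrix_mul_assoc)
  also have "\<dots> = ?x"
    by (simp add: trace_matrix_mult matrix_transpose_mul)
  finally have mixed_trace:
    "unit_sum (\<lambda>V::real^'p^'n. V \<bullet> (S ** transpose S ** T ** transpose T ** V)) = ?p * ?x"
    using unit_sum_inner_mult[of "S ** transpose S ** T ** transpose T"]
    by (simp add: matrix_mul_assoc)
  have mixed_S: "unit_sum (\<lambda>V::real^'p^'n. V \<bullet> (S ** transpose S ** T ** transpose V ** T)) = ?x"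
    using unit_sum_inner_mult_transpose_mult[of "S ** transpose S ** T" T]
    by (simp add: inner_mult_transpose_mult_self)
  have mixed_T: "unit_sum (\<lambda>V::real^'p^'n. V \<bullet> (T ** transpose T ** S ** transpose V ** S)) = ?x"
    using unit_sum_inner_mult_transpose_mult[of "T ** transpose T ** S" S]
    by (simp add: inner_mult_transpose_mult_self x_sym)
  show ?thesis
    by (simp only: inner_proj_proj unit_sum_add unit_sum_diff unit_sum_mult norms proj[OF S] proj[OF T]
        sandwich[OF S] sandwich[OF T] mixed_trace mixed_S mixed_T unit_sum_inner_sandwich)
      (simp add: algebra_simps power2_eq_square)
qed

text \<open>The value of \<open>unit_sum\<close> applied to the edge term of \<open>second_variation\<close> at the
  projected directions (\<open>unit_sum_second_variation_edge\<close>).\<close>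

definition total_edge_variation :: "real^'p^'n \<Rightarrow> real^'p^'n \<Rightarrow> real" where
  "total_edge_variation S T =
     (real CARD('n) - real CARD('p) / 2 - 1 / 2) * (S \<bullet> T)
     - (real CARD('p) * real CARD('n) - (real CARD('p))\<^sup>2 - real CARD('p)
        + ((real CARD('p) + 2) * ((transpose S ** T) \<bullet> (transpose S ** T)) + (S \<bullet> T)\<^sup>2) / 4)"

lemma unit_sum_second_variation_edge:
  fixes S T :: "real^'p^'n"
  assumes S: "S \<in> stiefel" and T: "T \<in> stiefel"
  shows "unit_sum (\<lambda>V. ((S ** (transpose (stiefel_proj S V) ** stiefel_proj S V)) \<bullet> T
        + S \<bullet> (T ** (transpose (stiefel_proj T V) ** stiefel_proj T V))) / 2
      - stiefel_proj S V \<bullet> stiefel_proj T V)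
    = total_edge_variation S T"
proof -
  have "S \<bullet> (T ** X) = (T ** X) \<bullet> S" for X
    by (rule inner_commute)
  then show ?thesis
    by (simp add: unit_sum_diff unit_sum_divide unit_sum_add unit_sum_proj_gram_inner[OF S]
        unit_sum_proj_gram_inner[OF T] unit_sum_inner_proj_proj[OF S T] inner_commute[of T S]
        total_edge_variation_def algebra_simps)
      (simp add: field_simps)
qed

lemma unit_sum_second_variation:
  assumes "\<And>i j. (i, j) \<in> edge_pairs E \<Longrightarrow> S i \<in> stiefel \<and> S j \<in> stiefel"
  shows "unit_sum (\<lambda>V. second_variation E S (\<lambda>i. stiefel_proj (S i) V))
    = (\<Sum>(i,j)\<in>edge_pairs E. total_edge_variation (S i) (S j))"
proof -
  have "unit_sum (\<lambda>V. second_variation E S (\<lambda>i. stiefel_proj (S i) V))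
      = (\<Sum>(i,j)\<in>edge_pairs E. unit_sum (\<lambda>V.
          ((S i ** (transpose (stiefel_proj (S i) V) ** stiefel_proj (S i) V)) \<bullet> S j
          + S i \<bullet> (S j ** (transpose (stiefel_proj (S j) V) ** stiefel_proj (S j) V))) / 2
          - stiefel_proj (S i) V \<bullet> stiefel_proj (S j) V))"
    unfolding second_variation_eq_edge_sum unit_sum_def split_def
    by (subst sum.swap, rule sum.cong[OF refl], subst sum.swap, rule refl)
  also have "\<dots> = (\<Sum>(i,j)\<in>edge_pairs E. total_edge_variation (S i) (S j))"
    using assms by (intro sum.cong refl) (auto simp: unit_sum_second_variation_edge)
  finally show ?thesis .
qed

section \<open>Consensus\<close>

lemma sum_nonpos_eq_0_iff:
  fixes f :: "'a \<Rightarrow> 'b::ordered_ab_group_add"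
  assumes "finite A" and "\<And>x. x \<in> A \<Longrightarrow> f x \<le> 0"
  shows "sum f A = 0 \<longleftrightarrow> (\<forall>x\<in>A. f x = 0)"
  using sum_nonneg_eq_0_iff[OF assms(1), of "\<lambda>x. - f x"] assms(2) by (simp add: sum_negf)

lemma total_edge_variation_bound:
  fixes S T :: "real^'p^'n"
  assumes S: "S \<in> stiefel" and T: "T \<in> stiefel"
    and pn: "real CARD('p) \<le> 2 * real CARD('n) / 3 - 1"
  shows "4 * real CARD('p) * total_edge_variation S T
    \<le> - 2 * ((real CARD('p) + 1) * (real CARD('p) - S \<bullet> T)\<^sup>2)"
proof -
  define p n t x where "p = real CARD('p)" and "n = real CARD('n)" and "t = S \<bullet> T"
    and "x = (transpose S ** T) \<bullet> (transpose S ** T)"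
  have "t \<le> norm S * norm T"
    unfolding t_def by (rule norm_cauchy_schwarz)
  then have tp: "t \<le> p"
    using stiefel_inner_self[OF S] stiefel_inner_self[OF T]
    by (simp add: p_def norm_eq_sqrt_inner)
  have tx: "t\<^sup>2 \<le> p * x"
    using trace_square_le[of "transpose S ** T"] by (simp add: t_def p_def x_def trace_matrix_mult)
  have "0 \<le> p * (p - t) * (2 * n - 3 * p - 3)"
    using tp pn by (simp add: p_def n_def)
  moreover have "(p + 2) * t\<^sup>2 \<le> (p + 2) * (p * x)"
    using tx by (simp add: p_def)
  moreover have "4 * p * total_edge_variation S T + 2 * ((p + 1) * (p - t)\<^sup>2)
      = - 2 * (p * (p - t) * (2 * n - 3 * p - 3)) - ((p + 2) * (p * x) - (p + 2) * t\<^sup>2)"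
    by (simp add: total_edge_variation_def p_def n_def t_def x_def algebra_simps
        power2_eq_square)
  ultimately show ?thesis
    unfolding p_def t_def by linarith
qed

lemma total_edge_variation_nonpos:
  fixes S T :: "real^'p^'n"
  assumes "S \<in> stiefel" and "T \<in> stiefel"
    and "real CARD('p) \<le> 2 * real CARD('n) / 3 - 1"
  shows "total_edge_variation S T \<le> 0"
proof -
  have "0 \<le> (real CARD('p) + 1) * (real CARD('p) - S \<bullet> T)\<^sup>2"
    by simp
  then have "4 * real CARD('p) * total_edge_variation S T \<le> 0"
    using total_edge_variation_bound[OF assms] by linarith
  then show ?thesis
    by (simp add: mult_le_0_iff)
qed

lemma total_edge_variation_eq_0_imp_eq:
  fixes S T :: "real^'p^'n"
  assumes S: "S \<in> stiefel" and T: "T \<in> stiefel"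
    and pn: "real CARD('p) \<le> 2 * real CARD('n) / 3 - 1"
    and zero: "total_edge_variation S T = 0"
  shows "S = T"
proof -
  have "0 \<le> (real CARD('p) + 1) * (real CARD('p) - S \<bullet> T)\<^sup>2"
    by simp
  moreover have "0 \<le> - 2 * ((real CARD('p) + 1) * (real CARD('p) - S \<bullet> T)\<^sup>2)"
    using total_edge_variation_bound[OF S T pn] by (simp only: zero mult_zero_right)
  ultimately have "(real CARD('p) + 1) * (real CARD('p) - S \<bullet> T)\<^sup>2 = 0"
    by linarith
  then have "S \<bullet> T = real CARD('p)"
    by simp
  then have "(S - T) \<bullet> (S - T) = 0"
    using stiefel_inner_self[OF S] stiefel_inner_self[OF T]
    by (simp add: inner_diff_left inner_diff_right inner_commute[of T S])
  then show ?thesis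
    by simp
qed

lemma edges_eq_if_edge_pairs_eq:
  assumes G: "undirected_graph N E" and eq: "\<And>i j. (i, j) \<in> edge_pairs E \<Longrightarrow> S i = S j"
  shows "\<forall>(i,j)\<in>E. S i = S j"
proof clarify
  fix i j assume ij: "(i, j) \<in> E"
  then have "i \<noteq> j" and "(j, i) \<in> E"
    using G by (auto simp: undirected_graph_def sym_def)
  show "S i = S j"
  proof (cases "i < j")
    case True
    with ij show ?thesis
      by (simp add: eq edge_pairs_def)
  next
    case False
    with \<open>i \<noteq> j\<close> \<open>(j, i) \<in> E\<close> show ?thesis
      using eq[of j i] by (simp add: edge_pairs_def)
  qed
qed

lemma local_minimizer_total_edge_variation_nonneg:
  assumes G: "undirected_graph N E" and LM: "local_minimizer N E S"
  shows "0 \<le> (\<Sum>(i,j)\<in>edge_pairs E. total_edge_variation (S i) (S j))"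
proof -
  have "0 \<le> unit_sum (\<lambda>V. second_variation E S (\<lambda>i. stiefel_proj (S i) V))"
    unfolding unit_sum_def
    by (intro sum_nonneg local_minimizer_second_variation[OF G LM] stiefel_tangent_proj
        local_minimizer_stiefel[OF LM])
  also have "\<dots> = (\<Sum>(i,j)\<in>edge_pairs E. total_edge_variation (S i) (S j))"
    using edge_pairs_subset[OF G] local_minimizer_stiefel[OF LM]
    by (intro unit_sum_second_variation) blast
  finally show ?thesis .
qed

theorem theorem1:
  fixes N :: nat and E :: "(nat \<times> nat) set" and S :: "nat \<Rightarrow> real^'p^'n"
  assumes "real CARD('p) \<le> 2 * real CARD('n) / 3 - 1"
    and "connected_graph N E"
    and "local_minimizer N E S"
  shows "S \<in> consensus N E"
proof -
  note pn = assms(1) and LM = assms(3)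
  have G: "undirected_graph N E"
    using assms(2) by (simp add: connected_graph_def)
  have S_edge: "S i \<in> stiefel" "S j \<in> stiefel" if "(i, j) \<in> edge_pairs E" for i j
    using that edge_pairs_subset[OF G] local_minimizer_stiefel[OF LM] by auto
  let ?h = "\<lambda>(i,j). total_edge_variation (S i) (S j)"
  have nonpos: "?h e \<le> 0" if "e \<in> edge_pairs E" for e
    using that S_edge total_edge_variation_nonpos[OF _ _ pn] by (cases e) auto
  then have "sum ?h (edge_pairs E) \<le> 0"
    by (rule sum_nonpos)
  then have "sum ?h (edge_pairs E) = 0"
    using local_minimizer_total_edge_variation_nonneg[OF G LM] by linarith
  then have "\<forall>e\<in>edge_pairs E. ?h e = 0"
    using sum_nonpos_eq_0_iff[OF finite_edge_pairs[OF G], of ?h] nonpos by blast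
  then have "S i = S j" if "(i, j) \<in> edge_pairs E" for i j
    using that S_edge total_edge_variation_eq_0_imp_eq[OF _ _ pn] by fastforce
  then have "\<forall>(i,j)\<in>E. S i = S j"
    by (rule edges_eq_if_edge_pairs_eq[OF G])
  then show ?thesis
    using LM by (simp add: consensus_def local_minimizer_def)
qed

end
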